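(* Let $a,b,c,d\in R_\omega-\mathbb{F}_q$ be such that $ad-bc=1$ and $|a|_\omega\ge|b|_\omega$. Then $|c|_\omega\ge|d|_\omega$.
   Context: $\mathbb{F}_q$ is a finite field of order $q$, $K$ is the function field of a geometrically connected smooth projective curve $\mathbf C$ over $\mathbb{F}_q$, $\omega$ is a normalized discrete valuation of $K$ (corresponding to a closed point of $\mathbf C$), $K_\omega$ is the completion of $K$ at $\omega$, $q_\omega$ is the order of the residue field of $\omega$, and $|x|_\omega=q_\omega^{-\omega(x)}$. $R_\omega$ is the ring of elements of $K$ whose only poles are at the closed point $\omega$ (the affine coordinate ring of $\mathbf C-\{\omega\}$). *)

theory Defs
  imports Complex_Main "HOL-Computational_Algebra.Polynomial"
begin

text \<open>The function field K is the whole (field) type 'k; the constant field F_q is a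
subset F of it.\<close>

definition subfield :: "'k::field set \<Rightarrow> bool" where
  "subfield F \<longleftrightarrow> 0 \<in> F \<and> 1 \<in> F \<and>
     (\<forall>x\<in>F. \<forall>y\<in>F. x + y \<in> F \<and> x * y \<in> F) \<and> (\<forall>x\<in>F. - x \<in> F) \<and>
     (\<forall>x\<in>F. x \<noteq> 0 \<longrightarrow> inverse x \<in> F)"

definition algebraic_over :: "'k::field set \<Rightarrow> 'k \<Rightarrow> bool" where
  "algebraic_over F x \<longleftrightarrow> (\<exists>p. p \<noteq> 0 \<and> (\<forall>i. coeff p i \<in> F) \<and> poly p x = 0)"

definition rat_fun_field :: "'k::field set \<Rightarrow> 'k \<Rightarrow> 'k set" where
  "rat_fun_field F t = {poly p t / poly r t | p r.
      (\<forall>i. coeff p i \<in> F) \<and> (\<forall>i. coeff r i \<in> F) \<and> r \<noteq> 0}"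

definition finite_dim_over :: "'k::field set \<Rightarrow> bool" where
  "finite_dim_over L \<longleftrightarrow> (\<exists>B. finite B \<and>
      (\<forall>x. \<exists>c. (\<forall>b\<in>B. c b \<in> L) \<and> x = (\<Sum>b\<in>B. c b * b)))"

text \<open>K is the function field of a geometrically connected smooth projective curve over
  F_q: a finite extension of a rational function field F_q(t), with F_q algebraically
  closed in K (exact constant field F_q), and card F_q = q.\<close>
definition function_field_over :: "'k::field set \<Rightarrow> nat \<Rightarrow> bool" where
  "function_field_over F q \<longleftrightarrow> subfield F \<and> finite F \<and> card F = q \<and>
     (\<exists>t. \<not> algebraic_over F t \<and> finite_dim_over (rat_fun_field F t)) \<and>
     (\<forall>x. algebraic_over F x \<longrightarrow> x \<in> F)"

text \<open>Normalized discrete valuation of K trivial on F_q (= closed point of the curve).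
  Convention: the value at 0 is recorded as 0 (it is never used).\<close>
definition normalized_dvaluation :: "'k::field set \<Rightarrow> ('k \<Rightarrow> int) \<Rightarrow> bool" where
  "normalized_dvaluation F v \<longleftrightarrow> v 0 = 0 \<and>
     (\<forall>x y. x \<noteq> 0 \<longrightarrow> y \<noteq> 0 \<longrightarrow> v (x * y) = v x + v y) \<and>
     (\<forall>x y. x \<noteq> 0 \<longrightarrow> y \<noteq> 0 \<longrightarrow> x + y \<noteq> 0 \<longrightarrow> v (x + y) \<ge> min (v x) (v y)) \<and>
     surj v \<and> (\<forall>c\<in>F. c \<noteq> 0 \<longrightarrow> v c = 0)"

definition R_omega :: "'k::field set \<Rightarrow> ('k \<Rightarrow> int) \<Rightarrow> 'k set" where
  "R_omega F \<omega> = {x. \<forall>\<nu>. normalized_dvaluation F \<nu> \<and> \<nu> \<noteq> \<omega> \<longrightarrow> \<nu> x \<ge> 0}"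

definition val_ring :: "('k::field \<Rightarrow> int) \<Rightarrow> 'k set" where
  "val_ring \<omega> = {x. x = 0 \<or> \<omega> x \<ge> 0}"

definition residue_rel :: "('k::field \<Rightarrow> int) \<Rightarrow> ('k \<times> 'k) set" where
  "residue_rel \<omega> = {(x, y). x \<in> val_ring \<omega> \<and> y \<in> val_ring \<omega> \<and> (x - y = 0 \<or> \<omega> (x - y) > 0)}"

definition q_omega :: "('k::field \<Rightarrow> int) \<Rightarrow> nat" where
  "q_omega \<omega> = card (val_ring \<omega> // residue_rel \<omega>)"

definition absv :: "('k::field \<Rightarrow> int) \<Rightarrow> 'k \<Rightarrow> real" where
  "absv \<omega> x = (if x = 0 then 0 else real (q_omega \<omega>) powr (- real_of_int (\<omega> x)))"

end

theory Submission
  imports Defs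
begin

text \<open>A non-constant \<open>z \<in> R\<^sub>\<omega>\<close> has a pole somewhere, and \<open>\<omega>\<close> is its only possible pole,
  so \<open>\<omega>(z) < 0\<close>. Hence \<open>|a|, |d| > 1\<close>; if \<open>|c| < |d|\<close> then \<open>|bc| < |ad|\<close>, and the
  ultrametric inequality gives \<open>|ad - bc| = |ad| > 1\<close>, contradicting \<open>ad - bc = 1\<close>.

  By Zorn's lemma some subring
  \<open>V \<supseteq> F\<close> is maximal among those containing \<open>y = 1/x\<close> but not \<open>x\<close>, and such a \<open>V\<close> is a
  valuation ring. If \<open>K\<close> is spanned by \<open>n\<close> elements over \<open>F(t)\<close>, two of \<open>1, a, \<dots>, a\<^sup>n\<close>
  are associated up to \<open>F(t)\<^sup>\<times>\<close>, so \<open>a\<^bsup>n!\<^esup>\<close> is a unit of \<open>V\<close> times an element of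
  \<open>F(t)\<close>; on \<open>F(t)\<close> every value is a multiple of the value of a single element \<open>g\<close>
  (\<open>1/t\<close> or a prime polynomial in \<open>t\<close>). Counting powers of \<open>g\<close> in \<open>a\<^bsup>n!\<^esup>\<close> yields an
  integer valuation, which divided by its least positive value is a normalized discrete
  valuation, negative at \<open>x\<close>.\<close>

section \<open>Subrings and polynomials over them\<close>

definition subring :: "'k::field set \<Rightarrow> bool" where
  "subring S \<longleftrightarrow> 0 \<in> S \<and> 1 \<in> S \<and> (\<forall>x\<in>S. \<forall>y\<in>S. x + y \<in> S \<and> x * y \<in> S) \<and> (\<forall>x\<in>S. - x \<in> S)"

abbreviation poly_over :: "'k::field set \<Rightarrow> 'k poly \<Rightarrow> bool" where
  "poly_over S p \<equiv> \<forall>i. coeff p i \<in> S"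

definition adjoin :: "'k::field set \<Rightarrow> 'k \<Rightarrow> 'k set" where
  "adjoin S z = {poly p z | p. poly_over S p}"

lemma subringD:
  assumes "subring S"
  shows "0 \<in> S" "1 \<in> S" "x \<in> S \<Longrightarrow> y \<in> S \<Longrightarrow> x + y \<in> S"
    "x \<in> S \<Longrightarrow> y \<in> S \<Longrightarrow> x * y \<in> S" "x \<in> S \<Longrightarrow> - x \<in> S"
    "x \<in> S \<Longrightarrow> y \<in> S \<Longrightarrow> x - y \<in> S"
  using assms unfolding subring_def by (metis diff_conv_add_uminus)+

lemma subring_sum: "subring S \<Longrightarrow> (\<And>i. i \<in> A \<Longrightarrow> f i \<in> S) \<Longrightarrow> sum f A \<in> S"
  by (induction A rule: infinite_finite_induct) (auto intro: subringD)

lemma subring_power: "subring S \<Longrightarrow> x \<in> S \<Longrightarrow> x ^ n \<in> S"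
  by (induction n) (auto intro: subringD)

lemma subfield_subring: "subfield F \<Longrightarrow> subring F"
  unfolding subfield_def subring_def by auto

lemma subfieldD:
  assumes "subfield S"
  shows "0 \<in> S" "1 \<in> S" "x \<in> S \<Longrightarrow> y \<in> S \<Longrightarrow> x + y \<in> S"
    "x \<in> S \<Longrightarrow> y \<in> S \<Longrightarrow> x * y \<in> S" "x \<in> S \<Longrightarrow> - x \<in> S"
    "x \<in> S \<Longrightarrow> y \<in> S \<Longrightarrow> x - y \<in> S" "x \<in> S \<Longrightarrow> inverse x \<in> S"
    "x \<in> S \<Longrightarrow> y \<in> S \<Longrightarrow> x / y \<in> S"
  using assms subringD[OF subfield_subring[OF assms]] unfolding subfield_def
  by (metis inverse_zero divide_inverse)+

lemma subfield_sum: "subfield S \<Longrightarrow> (\<And>i. i \<in> A \<Longrightarrow> f i \<in> S) \<Longrightarrow> sum f A \<in> S"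
  by (rule subring_sum[OF subfield_subring])

lemma poly_over_add: "subring S \<Longrightarrow> poly_over S p \<Longrightarrow> poly_over S q \<Longrightarrow> poly_over S (p + q)"
  by (auto intro: subringD)

lemma poly_over_diff: "subring S \<Longrightarrow> poly_over S p \<Longrightarrow> poly_over S q \<Longrightarrow> poly_over S (p - q)"
  by (auto intro: subringD)

lemma poly_over_uminus: "subring S \<Longrightarrow> poly_over S p \<Longrightarrow> poly_over S (- p)"
  by (auto intro: subringD)

lemma poly_over_mult: "subring S \<Longrightarrow> poly_over S p \<Longrightarrow> poly_over S q \<Longrightarrow> poly_over S (p * q)"
  by (auto simp: coeff_mult intro!: subring_sum subringD)

lemma poly_over_smult: "subring S \<Longrightarrow> c \<in> S \<Longrightarrow> poly_over S q \<Longrightarrow> poly_over S (smult c q)"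
  by (auto intro: subringD)

lemma poly_over_monom: "subring S \<Longrightarrow> c \<in> S \<Longrightarrow> poly_over S (monom c n)"
  by (auto simp: coeff_monom intro: subringD)

lemma poly_over_const: "subring S \<Longrightarrow> c \<in> S \<Longrightarrow> poly_over S [:c:]"
  by (auto simp: coeff_pCons split: nat.splits intro: subringD)

lemma poly_over_pCons: "poly_over S (pCons a p) \<Longrightarrow> a \<in> S \<and> poly_over S p"
  by (metis coeff_pCons_0 coeff_pCons_Suc)

lemma poly_in_subring: "subring S \<Longrightarrow> z \<in> S \<Longrightarrow> poly_over S p \<Longrightarrow> poly p z \<in> S"
  by (induction p rule: pCons_induct) (auto dest: poly_over_pCons intro!: subringD)

lemma subring_adjoin:
  assumes "subring S" shows "subring (adjoin S z)" "S \<subseteq> adjoin S z" "z \<in> adjoin S z"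
proof -
  have const: "c \<in> adjoin S z" if "c \<in> S" for c
    unfolding adjoin_def using poly_over_const[OF assms that] by (intro CollectI exI[of _ "[:c:]"]) auto
  then show "S \<subseteq> adjoin S z" by auto
  show "z \<in> adjoin S z"
    unfolding adjoin_def using poly_over_monom[OF assms subringD(2)[OF assms], of 1]
    by (intro CollectI exI[of _ "monom 1 1"]) (auto simp: poly_monom)
  show "subring (adjoin S z)"
    unfolding subring_def
  proof (intro conjI ballI)
    show "0 \<in> adjoin S z" "1 \<in> adjoin S z" using const subringD[OF assms] by auto
  next
    fix x y assume "x \<in> adjoin S z" "y \<in> adjoin S z"
    then obtain p q where pq: "x = poly p z" "poly_over S p" "y = poly q z" "poly_over S q"
      unfolding adjoin_def by auto
    show "x + y \<in> adjoin S z"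
      unfolding adjoin_def using poly_over_add[OF assms pq(2,4)] pq(1,3)
      by (intro CollectI exI[of _ "p + q"]) simp
    show "x * y \<in> adjoin S z"
      unfolding adjoin_def using poly_over_mult[OF assms pq(2,4)] pq(1,3)
      by (intro CollectI exI[of _ "p * q"]) simp
  next
    fix x assume "x \<in> adjoin S z"
    then obtain p where "x = poly p z" "poly_over S p"
      unfolding adjoin_def by auto
    then show "- x \<in> adjoin S z"
      unfolding adjoin_def by (auto intro!: exI[of _ "- p"] poly_over_uminus[rule_format] assms)
  qed
qed

lemma poly_transcendental_nonzero:
  "\<not> algebraic_over F t \<Longrightarrow> poly_over F r \<Longrightarrow> r \<noteq> 0 \<Longrightarrow> poly r t \<noteq> 0"
  unfolding algebraic_over_def by blast

lemma rat_fun_fieldI: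
  "poly_over F p \<Longrightarrow> poly_over F r \<Longrightarrow> r \<noteq> 0 \<Longrightarrow> x = poly p t / poly r t \<Longrightarrow> x \<in> rat_fun_field F t"
  unfolding rat_fun_field_def by blast

lemma rat_fun_fieldE:
  assumes "x \<in> rat_fun_field F t"
  obtains p r where "poly_over F p" "poly_over F r" "r \<noteq> 0" "x = poly p t / poly r t"
  using assms unfolding rat_fun_field_def by blast

lemma rat_fun_field_subfield:
  assumes F: "subfield F" and t: "\<not> algebraic_over F t"
  shows "subfield (rat_fun_field F t)" "F \<subseteq> rat_fun_field F t" "t \<in> rat_fun_field F t"
proof -
  have R: "subring F" using F by (rule subfield_subring)
  have one: "poly_over F [:1:]" using poly_over_const[OF R subringD(2)[OF R]] .
  have const: "c \<in> rat_fun_field F t" if "c \<in> F" for c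
    by (rule rat_fun_fieldI[OF poly_over_const[OF R that] one]) auto
  then show "F \<subseteq> rat_fun_field F t" by auto
  show "t \<in> rat_fun_field F t"
    by (rule rat_fun_fieldI[OF poly_over_monom[OF R subringD(2)[OF R], of 1] one]) (auto simp: poly_monom)
  show "subfield (rat_fun_field F t)"
    unfolding subfield_def
  proof (intro conjI ballI impI)
    show "0 \<in> rat_fun_field F t" "1 \<in> rat_fun_field F t" using const subringD[OF R] by auto
  next
    fix x y assume "x \<in> rat_fun_field F t" "y \<in> rat_fun_field F t"
    then obtain p r p' r' where x: "poly_over F p" "poly_over F r" "r \<noteq> 0" "x = poly p t / poly r t"
      and y: "poly_over F p'" "poly_over F r'" "r' \<noteq> 0" "y = poly p' t / poly r' t"
      by (metis rat_fun_fieldE)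
    have nz: "poly r t \<noteq> 0" "poly r' t \<noteq> 0" using poly_transcendental_nonzero[OF t] x y by auto
    have "x + y = poly (p * r' + p' * r) t / poly (r * r') t"
      unfolding x(4) y(4) using nz by (simp add: field_simps)
    then show "x + y \<in> rat_fun_field F t"
      by (intro rat_fun_fieldI[OF poly_over_add[OF R poly_over_mult[OF R x(1) y(2)]
            poly_over_mult[OF R y(1) x(2)]] poly_over_mult[OF R x(2) y(2)]]) (use x y in auto)
    have "x * y = poly (p * p') t / poly (r * r') t"
      unfolding x(4) y(4) using nz by (simp add: field_simps)
    then show "x * y \<in> rat_fun_field F t"
      by (intro rat_fun_fieldI[OF poly_over_mult[OF R x(1) y(1)] poly_over_mult[OF R x(2) y(2)]])
        (use x y in auto)
  next
    fix x assume "x \<in> rat_fun_field F t"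
    then obtain p r where x: "poly_over F p" "poly_over F r" "r \<noteq> 0" "x = poly p t / poly r t"
      by (rule rat_fun_fieldE)
    show "- x \<in> rat_fun_field F t"
      by (rule rat_fun_fieldI[OF poly_over_uminus[OF R x(1)] x(2,3)]) (simp add: x(4))
    assume "x \<noteq> 0"
    then have "p \<noteq> 0" using x(4) by auto
    then show "inverse x \<in> rat_fun_field F t"
      by (rule rat_fun_fieldI[OF x(2,1)]) (simp_all add: x(4))
  qed
qed

section \<open>Maximal subrings avoiding an element\<close>

definition one_in_ideal_poly :: "'k::field set \<Rightarrow> 'k \<Rightarrow> 'k \<Rightarrow> nat \<Rightarrow> bool" where
  "one_in_ideal_poly V y x n \<longleftrightarrow> (\<exists>p. poly_over ((*) y ` V) p \<and> degree p \<le> n \<and> poly p x = 1)"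

lemma principal_ideal_closed:
  assumes "subring V"
  shows "0 \<in> (*) y ` V"
    and "a \<in> (*) y ` V \<Longrightarrow> b \<in> (*) y ` V \<Longrightarrow> a + b \<in> (*) y ` V"
    and "a \<in> (*) y ` V \<Longrightarrow> b \<in> (*) y ` V \<Longrightarrow> a - b \<in> (*) y ` V"
    and "c \<in> V \<Longrightarrow> a \<in> (*) y ` V \<Longrightarrow> c * a \<in> (*) y ` V"
    and "y \<in> V \<Longrightarrow> a \<in> (*) y ` V \<Longrightarrow> a \<in> V"
proof -
  note V = subringD[OF assms]
  show "0 \<in> (*) y ` V" using V(1) by (metis image_eqI mult_zero_right)
  show "a + b \<in> (*) y ` V" if "a \<in> (*) y ` V" "b \<in> (*) y ` V"
    using that V(3) by (auto simp: distrib_left[symmetric])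
  show "a - b \<in> (*) y ` V" if "a \<in> (*) y ` V" "b \<in> (*) y ` V"
    using that V(6) by (auto simp: right_diff_distrib[symmetric])
  show "c * a \<in> (*) y ` V" if "c \<in> V" "a \<in> (*) y ` V"
    using that V(4) by (auto simp: mult.left_commute[of c y])
  show "a \<in> V" if "y \<in> V" "a \<in> (*) y ` V"
    using that V(4) by auto
qed

text \<open>Reflecting \<open>q\<close>, with \<open>q(1/x) = 1\<close> and \<open>k = deg q\<close>, gives \<open>x\<^sup>k = q(0) x\<^sup>k + r(x)\<close> with
  \<open>deg r < k\<close>; as \<open>1 - q(0)\<close> is a unit, \<open>x\<^sup>n\<close> is the value at \<open>x\<close> of a polynomial over \<open>y V\<close>
  of degree below \<open>n\<close>.\<close>
lemma power_as_ideal_poly: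
  assumes V: "subring V" and U: "\<forall>b\<in>V. \<exists>u\<in>V. u * (1 + y * b) = 1"
    and x: "x \<noteq> 0" and m: "one_in_ideal_poly V y (inverse x) m" and "m \<le> n"
  shows "\<exists>Z. poly_over ((*) y ` V) Z \<and> (\<forall>i\<ge>n. coeff Z i = 0) \<and> poly Z x = x ^ n"
proof -
  note P = principal_ideal_closed[OF V]
  obtain q where q: "poly_over ((*) y ` V) q" "degree q \<le> m" "poly q (inverse x) = 1"
    using m unfolding one_in_ideal_poly_def by blast
  define k where "k = degree q"
  define b0 where "b0 = coeff q 0"
  obtain \<beta> where "\<beta> \<in> V" "b0 = y * \<beta>" using q(1) unfolding b0_def by blast
  then obtain u where u: "u \<in> V" "u * (1 - b0) = 1" using U subringD(5)[OF V] by fastforce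
  define r where "r = reflect_poly q - monom b0 k"
  have pr: "poly r x = (1 - b0) * x ^ k"
    unfolding r_def k_def using poly_reflect_poly_nz[OF x, of q] q(3) by (simp add: poly_monom algebra_simps)
  have r_lower: "coeff r i = 0" if "i \<ge> k" for i
    using that unfolding r_def b0_def k_def by (auto simp: coeff_reflect_poly coeff_monom)
  have r_over: "poly_over ((*) y ` V) r"
    unfolding r_def coeff_diff coeff_monom coeff_reflect_poly using q(1) P(1,3) b0_def by auto
  define Z where "Z = smult u (monom 1 (n - k) * r)"
  have "k \<le> n" using q(2) \<open>m \<le> n\<close> unfolding k_def by linarith
  have "poly Z x = u * (1 - b0) * (x ^ (n - k) * x ^ k)"
    unfolding Z_def by (simp add: poly_monom pr ac_simps)
  also have "\<dots> = x ^ n" using u(2) \<open>k \<le> n\<close> by (simp add: power_add[symmetric])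
  finally have "poly Z x = x ^ n" .
  moreover have cZ: "coeff Z i = u * (if n - k \<le> i then coeff r (i - (n - k)) else 0)" for i
    unfolding Z_def by (simp add: coeff_monom_mult)
  then have "poly_over ((*) y ` V) Z" using P(1) P(4)[OF u(1)] r_over by simp
  moreover have "coeff Z i = 0" if "i \<ge> n" for i
    using cZ[of i] r_lower[of "i - (n - k)"] that \<open>k \<le> n\<close> by auto
  ultimately show ?thesis by blast
qed

lemma one_in_ideal_poly_decrease:
  assumes V: "subring V" and y: "y \<in> V" and U: "\<forall>b\<in>V. \<exists>u\<in>V. u * (1 + y * b) = 1"
    and x: "x \<noteq> 0" and n: "one_in_ideal_poly V y x n" and m: "one_in_ideal_poly V y (inverse x) m"
    and "m \<le> n" and "n \<ge> 1"
  shows "one_in_ideal_poly V y x (n - 1)"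
proof -
  note P = principal_ideal_closed[OF V]
  obtain p where p: "poly_over ((*) y ` V) p" "degree p \<le> n" "poly p x = 1"
    using n unfolding one_in_ideal_poly_def by blast
  obtain Z where Z: "poly_over ((*) y ` V) Z" "\<And>i. i \<ge> n \<Longrightarrow> coeff Z i = 0" "poly Z x = x ^ n"
    using power_as_ideal_poly[OF V U x m \<open>m \<le> n\<close>] by blast
  define c where "c = coeff p n"
  have "c \<in> V" using P(5)[OF y] p(1) c_def by auto
  define p' where "p' = p - monom c n + smult c Z"
  have "poly p' x = 1" unfolding p'_def using p(3) Z(3) by (simp add: poly_monom)
  moreover have "poly_over ((*) y ` V) p'"
  proof
    fix i
    have "coeff p' i = (coeff p i - (if n = i then c else 0)) + c * coeff Z i"
      unfolding p'_def by (simp add: coeff_monom)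
    then show "coeff p' i \<in> (*) y ` V" using p(1) P(1-4) Z(1) \<open>c \<in> V\<close> c_def by auto
  qed
  moreover have "degree p' \<le> n - 1"
  proof (rule degree_le, intro allI impI)
    fix i assume "n - 1 < i"
    then show "coeff p' i = 0"
      using p(2) Z(2) \<open>n \<ge> 1\<close> unfolding p'_def c_def by (auto simp: coeff_monom coeff_eq_0)
  qed
  ultimately show ?thesis unfolding one_in_ideal_poly_def by blast
qed

lemma not_one_in_ideal_poly_0:
  assumes "one_in_ideal_poly V y x 0" "\<And>b. b \<in> V \<Longrightarrow> y * b \<noteq> 1"
  shows False
proof -
  obtain p where p: "poly_over ((*) y ` V) p" "degree p = 0" "poly p x = 1"
    using assms(1) unfolding one_in_ideal_poly_def by blast
  then have "coeff p 0 = 1" by (simp add: poly_altdef)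
  then show False using p(1) assms(2) by (metis imageE)
qed

lemma one_in_ideal_poly_if_adjoin:
  assumes "inverse y \<in> adjoin V x" "y \<noteq> 0"
  shows "\<exists>n. one_in_ideal_poly V y x n"
proof -
  obtain f where f: "inverse y = poly f x" "poly_over V f" using assms(1) unfolding adjoin_def by auto
  have "y * poly f x = 1" using f(1) assms(2) by (metis right_inverse)
  then have "one_in_ideal_poly V y x (degree f)"
    unfolding one_in_ideal_poly_def using f(2) by (intro exI[of _ "smult y f"]) auto
  then show ?thesis by blast
qed

locale subring_maximal_avoiding =
  fixes V :: "'k::field set" and y :: 'k
  assumes subring: "subring V" and y_in: "y \<in> V" and inverse_y_notin: "inverse y \<notin> V"
    and maximal: "\<And>W. subring W \<Longrightarrow> V \<subseteq> W \<Longrightarrow> inverse y \<notin> W \<Longrightarrow> W = V"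
begin

lemma y_mult_ne_one: "b \<in> V \<Longrightarrow> y * b \<noteq> 1"
  using inverse_y_notin by (metis inverse_unique)

lemma one_plus_y_mult_nonzero:
  assumes "b \<in> V" shows "1 + y * b \<noteq> 0"
proof
  assume "1 + y * b = 0"
  then have "y * (- b) = 1" by (simp add: algebra_simps add_eq_0_iff)
  then show False using y_mult_ne_one subringD(5)[OF subring assms] by blast
qed

lemma localization_subring:
  defines "W \<equiv> {a / (1 + y * c) | a c. a \<in> V \<and> c \<in> V}"
  shows "subring W" "V \<subseteq> W" "inverse y \<notin> W"
proof -
  note V = subringD[OF subring]
  have inW: "a / (1 + y * c) \<in> W" if "a \<in> V" "c \<in> V" for a c
    unfolding W_def using that by blast
  show "V \<subseteq> W" using inW[of _ 0] V(1) by fastforce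
  have prod: "(1 + y * c) * (1 + y * c') = 1 + y * (c + c' + y * c * c')" for c c'
    by (simp add: algebra_simps)
  have prod_in: "c + c' + y * c * c' \<in> V" if "c \<in> V" "c' \<in> V" for c c'
    using that y_in V(3,4) by simp
  show "subring W" unfolding subring_def
  proof (intro conjI ballI)
    show "0 \<in> W" "1 \<in> W" using \<open>V \<subseteq> W\<close> V(1,2) by auto
  next
    fix s t assume "s \<in> W" "t \<in> W"
    then obtain a c a' c' where st: "s = a / (1 + y * c)" "t = a' / (1 + y * c')"
      and in_V: "a \<in> V" "c \<in> V" "a' \<in> V" "c' \<in> V" unfolding W_def by blast
    have "s + t = (a * (1 + y * c') + a' * (1 + y * c)) / (1 + y * (c + c' + y * c * c'))"
      unfolding st prod[symmetric] using one_plus_y_mult_nonzero in_V by (simp add: field_simps)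
    moreover have "a * (1 + y * c') + a' * (1 + y * c) \<in> V" using in_V y_in V(2-4) by simp
    ultimately show "s + t \<in> W" using inW prod_in in_V by simp
    have "s * t = (a * a') / (1 + y * (c + c' + y * c * c'))" unfolding st prod[symmetric] by simp
    then show "s * t \<in> W" using in_V prod_in inW V(4) by simp
  next
    fix s assume "s \<in> W"
    then obtain a c where "s = a / (1 + y * c)" "a \<in> V" "c \<in> V" unfolding W_def by blast
    then show "- s \<in> W" using inW V(5) by (metis minus_divide_left)
  qed
  show "inverse y \<notin> W"
  proof
    assume "inverse y \<in> W"
    then obtain a c where ac: "inverse y = a / (1 + y * c)" "a \<in> V" "c \<in> V" unfolding W_def by blast
    have "y \<noteq> 0" using inverse_y_notin V(1) by auto
    then have "y * (a - c) = 1"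
      using ac one_plus_y_mult_nonzero[OF ac(3)] by (simp add: field_simps)
    then show False using y_mult_ne_one V(6) ac(2,3) by blast
  qed
qed

lemma one_plus_y_mult_invertible: "\<forall>b\<in>V. \<exists>u\<in>V. u * (1 + y * b) = 1"
proof
  fix b assume b: "b \<in> V"
  let ?W = "{a / (1 + y * c) | a c. a \<in> V \<and> c \<in> V}"
  have "?W = V" using maximal localization_subring by blast
  moreover have "1 / (1 + y * b) \<in> ?W" using b subringD(2)[OF subring] by blast
  ultimately show "\<exists>u\<in>V. u * (1 + y * b) = 1"
    using one_plus_y_mult_nonzero[OF b] by (intro bexI[of _ "1 / (1 + y * b)"]) auto
qed

lemma inverse_y_in_adjoin: "x \<notin> V \<Longrightarrow> inverse y \<in> adjoin V x"
  using maximal subring_adjoin[OF subring, of x] by blast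

text \<open>Were \<open>x\<close> and \<open>1/x\<close> both outside \<open>V\<close>, \<open>1\<close> would lie in \<open>y V[x]\<close> and in \<open>y V[1/x]\<close>;
  of two representations of least degree, the one of larger degree could still be lowered.\<close>
lemma in_or_inverse_in: "x \<noteq> 0 \<Longrightarrow> x \<in> V \<or> inverse x \<in> V"
proof (rule ccontr)
  assume x0: "x \<noteq> 0" and "\<not> (x \<in> V \<or> inverse x \<in> V)"
  have y0: "y \<noteq> 0" using inverse_y_notin subringD(1)[OF subring] by auto
  have ex: "\<exists>n. one_in_ideal_poly V y z n" if "z \<in> {x, inverse x}" for z
    using that \<open>\<not> (x \<in> V \<or> inverse x \<in> V)\<close> one_in_ideal_poly_if_adjoin[OF inverse_y_in_adjoin y0]
    by blast
  define n where "n z = (LEAST n. one_in_ideal_poly V y z n)" for z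
  have n: "one_in_ideal_poly V y z (n z)" and n_min: "\<And>k. one_in_ideal_poly V y z k \<Longrightarrow> n z \<le> k"
    if "z \<in> {x, inverse x}" for z
    using ex[OF that] unfolding n_def by (auto intro: LeastI_ex Least_le)
  have n1: "n z \<ge> 1" if "z \<in> {x, inverse x}" for z
    using not_one_in_ideal_poly_0 y_mult_ne_one n[OF that] by (cases "n z") auto
  have lower: False if "z \<in> {x, inverse x}" "n (inverse z) \<le> n z" for z
  proof -
    have "inverse z \<in> {x, inverse x}" "z \<noteq> 0" using that(1) x0 by auto
    then have "one_in_ideal_poly V y z (n z - 1)"
      using one_in_ideal_poly_decrease[OF subring y_in one_plus_y_mult_invertible]
        n[OF that(1)] n that(2) n1[OF that(1)] by blast
    then show False using n_min[OF that(1)] n1[OF that(1)] by force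
  qed
  show False using lower[of x] lower[of "inverse x"] by fastforce
qed

end

lemma subring_Union_chain:
  assumes "C \<noteq> {}" "\<And>A B. A \<in> C \<Longrightarrow> B \<in> C \<Longrightarrow> A \<subseteq> B \<or> B \<subseteq> A"
    and "\<And>X. X \<in> C \<Longrightarrow> subring X"
  shows "subring (\<Union>C)"
  unfolding subring_def
proof (intro conjI ballI)
  obtain X where "X \<in> C" using assms(1) by auto
  then show "0 \<in> \<Union>C" "1 \<in> \<Union>C" using subringD(1,2)[OF assms(3)] by auto
next
  fix a b assume "a \<in> \<Union>C" "b \<in> \<Union>C"
  then obtain X where "X \<in> C" "a \<in> X" "b \<in> X"
    using assms(2) by blast
  then show "a + b \<in> \<Union>C" "a * b \<in> \<Union>C" using subringD(3,4)[OF assms(3)] by blast+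
next
  fix a assume "a \<in> \<Union>C"
  then show "- a \<in> \<Union>C" using subringD(5)[OF assms(3)] by blast
qed

lemma exists_subring_maximal_avoiding:
  assumes "subring S" "y \<in> S" "inverse y \<notin> S"
  shows "\<exists>V. S \<subseteq> V \<and> subring_maximal_avoiding V y"
proof -
  define \<S> where "\<S> = {V. subring V \<and> S \<subseteq> V \<and> inverse y \<notin> V}"
  have "\<forall>C\<in>chains \<S>. \<exists>U\<in>\<S>. \<forall>X\<in>C. X \<subseteq> U"
  proof
    fix C assume C: "C \<in> chains \<S>"
    show "\<exists>U\<in>\<S>. \<forall>X\<in>C. X \<subseteq> U"
    proof (cases "C = {}")
      case True then show ?thesis using assms unfolding \<S>_def by blast
    next
      case False
      have "C \<subseteq> \<S>" "\<And>A B. A \<in> C \<Longrightarrow> B \<in> C \<Longrightarrow> A \<subseteq> B \<or> B \<subseteq> A"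
        using C unfolding chains_def chain_subset_def by auto
      moreover obtain X where "X \<in> C" using False by blast
      ultimately have "\<Union>C \<in> \<S>" using subring_Union_chain[OF False] unfolding \<S>_def by blast
      then show ?thesis by blast
    qed
  qed
  from Zorn_Lemma2[OF this] obtain V where V: "V \<in> \<S>" and max: "\<forall>W\<in>\<S>. V \<subseteq> W \<longrightarrow> W = V"
    by blast
  have "subring_maximal_avoiding V y"
    using V max assms(2) unfolding \<S>_def subring_maximal_avoiding_def by blast
  then show ?thesis using V unfolding \<S>_def by blast
qed

section \<open>Valuation subrings\<close>

locale valuation_subring =
  fixes F :: "'k::field set" and V :: "'k set" and y :: 'k
  assumes subfield: "subfield F" and subring: "subring V" and F_subset: "F \<subseteq> V"
    and y_in: "y \<in> V" and inverse_y_notin: "inverse y \<notin> V"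
    and in_or_inverse_in: "\<And>x. x \<noteq> 0 \<Longrightarrow> x \<in> V \<or> inverse x \<in> V"

lemma (in subring_maximal_avoiding) valuation_subring:
  "subfield F \<Longrightarrow> F \<subseteq> V \<Longrightarrow> valuation_subring F V y"
  using subring y_in inverse_y_notin in_or_inverse_in by unfold_locales

context valuation_subring
begin

definition vunit :: "'k \<Rightarrow> bool" where
  "vunit x \<longleftrightarrow> x \<in> V \<and> x \<noteq> 0 \<and> inverse x \<in> V"

definition vmax :: "'k set" where
  "vmax = {x \<in> V. \<not> vunit x}"

lemma y_nonzero: "y \<noteq> 0"
  using inverse_y_notin subringD(1)[OF subring] by auto

lemma vunit_one: "vunit 1"
  unfolding vunit_def using subringD(2)[OF subring] by simp

lemma vunit_mult: "vunit a \<Longrightarrow> vunit b \<Longrightarrow> vunit (a * b)"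
  unfolding vunit_def by (auto simp: subringD(4)[OF subring] inverse_mult_distrib)

lemma vunit_inverse: "vunit a \<Longrightarrow> vunit (inverse a)"
  unfolding vunit_def by auto

lemma vunit_divide: "vunit a \<Longrightarrow> vunit b \<Longrightarrow> vunit (a / b)"
  by (simp add: divide_inverse vunit_mult vunit_inverse)

lemma vunit_power: "vunit a \<Longrightarrow> vunit (a ^ n)"
  by (induction n) (auto simp: vunit_one vunit_mult)

lemma vunit_const: "c \<in> F \<Longrightarrow> c \<noteq> 0 \<Longrightarrow> vunit c"
  unfolding vunit_def using F_subset subfieldD(7)[OF subfield] by auto

lemma zero_in_vmax: "0 \<in> vmax"
  unfolding vmax_def vunit_def using subringD(1)[OF subring] by auto

lemma vmaxD: "a \<in> vmax \<Longrightarrow> a \<in> V"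
  unfolding vmax_def by auto

lemma vunit_not_vmax: "vunit a \<Longrightarrow> a \<notin> vmax"
  unfolding vmax_def by auto

lemma vmax_mult:
  assumes a: "a \<in> vmax" and b: "b \<in> V" shows "a * b \<in> vmax"
proof -
  have "\<not> vunit (a * b)"
  proof
    assume u: "vunit (a * b)"
    then have "a \<noteq> 0" "b \<noteq> 0" unfolding vunit_def by auto
    then have "inverse a = b * inverse (a * b)" by (simp add: field_simps)
    moreover have "b * inverse (a * b) \<in> V"
      using u b subringD(4)[OF subring] unfolding vunit_def by blast
    ultimately have "inverse a \<in> V" by metis
    then have "vunit a" using vmaxD[OF a] \<open>a \<noteq> 0\<close> unfolding vunit_def by auto
    then show False using a vunit_not_vmax by blast
  qed
  then show ?thesis using a b subringD(4)[OF subring] unfolding vmax_def by auto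
qed

lemma vmax_mult_left: "a \<in> vmax \<Longrightarrow> b \<in> V \<Longrightarrow> b * a \<in> vmax"
  using vmax_mult by (simp add: mult.commute)

lemma vmax_uminus: "a \<in> vmax \<Longrightarrow> - a \<in> vmax"
  using vmax_mult[of a "- 1"] subringD(2,5)[OF subring] by simp

lemma vmax_add:
  assumes a: "a \<in> vmax" and b: "b \<in> vmax" shows "a + b \<in> vmax"
proof -
  have *: "a + b \<in> vmax" if "b / a \<in> V" "a \<in> vmax" "a \<noteq> 0" for a b
  proof -
    have "a + b = a * (1 + b / a)" using that(3) by (simp add: field_simps)
    then show ?thesis using that vmax_mult subringD(2,3)[OF subring] by simp
  qed
  show ?thesis
  proof (cases "a = 0 \<or> b = 0")
    case True then show ?thesis using a b by auto
  next
    case False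
    then have "b / a \<in> V \<or> a / b \<in> V" using in_or_inverse_in[of "b / a"] by auto
    then show ?thesis using *[of a b] *[of b a] a b False by (auto simp: add.commute)
  qed
qed

lemma vmax_sum: "(\<And>i. i \<in> A \<Longrightarrow> f i \<in> vmax) \<Longrightarrow> sum f A \<in> vmax"
  by (induction A rule: infinite_finite_induct) (auto simp: zero_in_vmax vmax_add)

lemma vunit_add_vmax:
  assumes u: "vunit u" and m: "m \<in> vmax" shows "vunit (u + m)"
proof (rule ccontr)
  assume "\<not> vunit (u + m)"
  moreover have "u + m \<in> V" using u m vmaxD subringD(3)[OF subring] unfolding vunit_def by auto
  ultimately have "u + m \<in> vmax" unfolding vmax_def by auto
  then have "(u + m) + - m \<in> vmax" using vmax_add vmax_uminus m by blast
  then show False using u vunit_not_vmax by simp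
qed

lemma inverse_in_vmax: "a \<noteq> 0 \<Longrightarrow> a \<notin> V \<Longrightarrow> inverse a \<in> vmax"
  using in_or_inverse_in[of a] unfolding vmax_def vunit_def by auto

lemma vmax_power: "a \<in> vmax \<Longrightarrow> k \<ge> 1 \<Longrightarrow> a ^ k \<in> vmax"
proof (induction k)
  case (Suc k)
  then show ?case by (cases "k = 0") (auto intro: vmax_mult_left vmaxD)
qed simp

lemma y_in_vmax: "y \<in> vmax"
  unfolding vmax_def vunit_def using y_in inverse_y_notin by auto

lemma in_V_if_power_in_V:
  assumes "a ^ k \<in> V" "k \<ge> 1" shows "a \<in> V"
proof (rule ccontr)
  assume "a \<notin> V"
  then have "a \<noteq> 0" using subringD(1)[OF subring] by auto
  then have "inverse a ^ k * a ^ k = 1" by (simp add: power_mult_distrib[symmetric])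
  moreover have "inverse a ^ k * a ^ k \<in> vmax"
    using vmax_mult[OF vmax_power[OF inverse_in_vmax] assms(1)] \<open>a \<noteq> 0\<close> \<open>a \<notin> V\<close> assms(2) by blast
  ultimately show False using vunit_one vunit_not_vmax by simp
qed

lemma poly_minus_coeff0_in_vmax:
  assumes "poly_over V p" and x: "x \<in> vmax"
  shows "poly p x - coeff p 0 \<in> vmax"
  using assms(1)
proof (induction p rule: pCons_induct)
  case 0 then show ?case using zero_in_vmax by simp
next
  case (pCons a p)
  then have "poly p x \<in> V" using poly_in_subring[OF subring vmaxD[OF x]] poly_over_pCons by blast
  then show ?case using vmax_mult[OF x] by simp
qed

lemma exists_min_valuation:
  assumes "finite S" "S \<noteq> {}" "\<forall>i\<in>S. x i \<noteq> 0"
  shows "\<exists>k\<in>S. \<forall>i\<in>S. x i / x k \<in> V"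
  using assms
proof (induction S rule: finite_ne_induct)
  case (singleton k) then show ?case using subringD(2)[OF subring] by auto
next
  case (insert j S)
  then obtain k where k: "k \<in> S" "\<forall>i\<in>S. x i / x k \<in> V" by auto
  have xj: "x j \<noteq> 0" "x k \<noteq> 0" using insert.prems k(1) by auto
  show ?case
  proof (cases "x j / x k \<in> V")
    case True then show ?thesis using k by auto
  next
    case False
    then have kj: "x k / x j \<in> V" using in_or_inverse_in[of "x j / x k"] xj by auto
    have "x i / x j \<in> V" if "i \<in> S" for i
    proof -
      have "x i / x j = (x i / x k) * (x k / x j)" using xj by simp
      then show ?thesis using subringD(4)[OF subring] k(2) that kj by metis
    qed
    moreover have "x j / x j \<in> V" using xj subringD(2)[OF subring] by simp
    ultimately show ?thesis by auto
  qed
qed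

definition power_unit_rep :: "'k \<Rightarrow> 'k \<Rightarrow> bool" where
  "power_unit_rep g a \<longleftrightarrow> (\<exists>i j u. vunit u \<and> a * g ^ j = g ^ i * u)"

definition assoc_over :: "'k set \<Rightarrow> 'k \<Rightarrow> 'k \<Rightarrow> bool" where
  "assoc_over L a b \<longleftrightarrow> (\<exists>l u. l \<in> L \<and> l \<noteq> 0 \<and> vunit u \<and> a = l * u * b)"

text \<open>Divide a vanishing sum by a term of least value: the other quotients lie in \<open>vmax\<close>, as a
  unit quotient would make two terms associated; but \<open>1\<close> plus an element of \<open>vmax\<close> is not \<open>0\<close>.\<close>
lemma nonassoc_linear_independent:
  assumes L: "subfield L" and I: "finite I" and a0: "\<forall>i\<in>I. a i \<noteq> 0"
    and nonassoc: "\<forall>i\<in>I. \<forall>j\<in>I. i \<noteq> j \<longrightarrow> \<not> assoc_over L (a i) (a j)"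
    and lL: "\<forall>i\<in>I. l i \<in> L" and sum0: "(\<Sum>i\<in>I. l i * a i) = 0"
  shows "\<forall>i\<in>I. l i = 0"
proof (rule ccontr)
  assume "\<not> (\<forall>i\<in>I. l i = 0)"
  define S where "S = {i\<in>I. l i \<noteq> 0}"
  have SI: "S \<subseteq> I" and Sne: "S \<noteq> {}" and fS: "finite S"
    using \<open>\<not> (\<forall>i\<in>I. l i = 0)\<close> I unfolding S_def by auto
  define x where "x i = l i * a i" for i
  have x0: "\<forall>i\<in>S. x i \<noteq> 0" using a0 unfolding S_def x_def by auto
  have sS: "(\<Sum>i\<in>S. x i) = 0"
    using sum0 sum.mono_neutral_right[OF I SI, of x] unfolding x_def S_def by auto
  obtain k where k: "k \<in> S" "\<forall>i\<in>S. x i / x k \<in> V" using exists_min_valuation[OF fS Sne x0] by blast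
  have in_vmax: "x i / x k \<in> vmax" if i: "i \<in> S - {k}" for i
  proof -
    have "\<not> vunit (x i / x k)"
    proof
      assume u: "vunit (x i / x k)"
      have li: "l i \<noteq> 0" "l k \<noteq> 0" "l i \<in> L" "l k \<in> L" using i k(1) lL unfolding S_def by auto
      have "a k \<noteq> 0" using a0 k(1) SI by auto
      then have "a i = (l k / l i) * (x i / x k) * a k"
        unfolding x_def using li(1,2) by (simp add: field_simps)
      moreover have "l k / l i \<in> L" "l k / l i \<noteq> 0" using li subfieldD(8)[OF L] by auto
      ultimately have "assoc_over L (a i) (a k)" unfolding assoc_over_def using u by blast
      then show False using nonassoc i k(1) SI by blast
    qed
    then show ?thesis using k(2) i unfolding vmax_def by auto
  qed
  have "(\<Sum>i\<in>S. x i / x k) = 0" using sS by (simp add: sum_divide_distrib[symmetric])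
  moreover have "(\<Sum>i\<in>S. x i / x k) = 1 + (\<Sum>i\<in>S - {k}. x i / x k)"
    using fS k(1) x0 by (simp add: sum.remove)
  moreover have "vunit (1 + (\<Sum>i\<in>S - {k}. x i / x k))"
    by (rule vunit_add_vmax[OF vunit_one vmax_sum]) (use in_vmax in blast)
  ultimately show False unfolding vunit_def by simp
qed

lemma assoc_over_sym:
  assumes "subfield L" "assoc_over L a b" shows "assoc_over L b a"
proof -
  obtain l u where lu: "l \<in> L" "l \<noteq> 0" "vunit u" "a = l * u * b"
    using assms(2) unfolding assoc_over_def by blast
  then have "b = inverse l * inverse u * a" unfolding vunit_def by (simp add: field_simps)
  then show ?thesis
    unfolding assoc_over_def using lu subfieldD(7)[OF assms(1)] vunit_inverse by force
qed

lemma assoc_over_cancel: "assoc_over L (c * a) (c * b) \<Longrightarrow> c \<noteq> 0 \<Longrightarrow> assoc_over L a b"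
  unfolding assoc_over_def by (metis (no_types, lifting) mult.left_commute mult_left_cancel)

end

section \<open>Linear dependence over a subfield\<close>

definition span_over :: "'k::field set \<Rightarrow> 'k set \<Rightarrow> 'k set" where
  "span_over L B = {x. \<exists>c. (\<forall>b\<in>B. c b \<in> L) \<and> x = (\<Sum>b\<in>B. c b * b)}"

lemma finite_dim_over_span: "finite_dim_over L \<longleftrightarrow> (\<exists>B. finite B \<and> (\<forall>x. x \<in> span_over L B))"
  unfolding finite_dim_over_def span_over_def by blast

lemma span_over_empty: "x \<in> span_over L {} \<Longrightarrow> x = 0"
  unfolding span_over_def by auto

lemma span_over_insert_family:
  assumes "finite B" "b \<notin> B" "\<forall>i\<in>I. a i \<in> span_over L (insert b B)"
  obtains c s where "\<And>i. i \<in> I \<Longrightarrow> c i \<in> L" "\<And>i. i \<in> I \<Longrightarrow> s i \<in> span_over L B"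
    "\<And>i. i \<in> I \<Longrightarrow> a i = c i * b + s i"
proof -
  obtain f where f: "\<forall>i\<in>I. (\<forall>b'\<in>insert b B. f i b' \<in> L) \<and> a i = (\<Sum>b'\<in>insert b B. f i b' * b')"
    using bchoice[OF assms(3)[unfolded span_over_def mem_Collect_eq]] by blast
  show thesis
  proof (rule that[of "\<lambda>i. f i b" "\<lambda>i. \<Sum>b'\<in>B. f i b' * b'"])
    show "(\<Sum>b'\<in>B. f i b' * b') \<in> span_over L B" if "i \<in> I" for i
      unfolding span_over_def using f that by auto
  qed (use f assms(1,2) in auto)
qed

lemma span_over_diff_scale:
  assumes L: "subfield L" and "s1 \<in> span_over L B" "s2 \<in> span_over L B" "c \<in> L"
  shows "s1 - c * s2 \<in> span_over L B"
proof -
  obtain c1 c2 where "\<forall>b\<in>B. c1 b \<in> L" "s1 = (\<Sum>b\<in>B. c1 b * b)"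
    and "\<forall>b\<in>B. c2 b \<in> L" "s2 = (\<Sum>b\<in>B. c2 b * b)"
    using assms(2,3) unfolding span_over_def by blast
  moreover have "(\<Sum>b\<in>B. c1 b * b) - c * (\<Sum>b\<in>B. c2 b * b) = (\<Sum>b\<in>B. (c1 b - c * c2 b) * b)"
    by (simp add: sum_subtractf sum_distrib_left algebra_simps)
  ultimately show ?thesis
    unfolding span_over_def using subfieldD[OF L] \<open>c \<in> L\<close>
    by (intro CollectI exI[of _ "\<lambda>b. c1 b - c * c2 b"]) auto
qed

lemma linear_dependent_eliminated:
  assumes L: "subfield L" and I: "finite I" and j: "j \<in> I" "c j \<noteq> 0" and c: "\<forall>i\<in>I. c i \<in> L"
    and \<mu>: "\<forall>i\<in>I - {j}. \<mu> i \<in> L" "\<exists>i\<in>I - {j}. \<mu> i \<noteq> 0"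
      "(\<Sum>i\<in>I - {j}. \<mu> i * (a i - (c i / c j) * a j)) = 0"
  shows "\<exists>l. (\<forall>i\<in>I. l i \<in> L) \<and> (\<exists>i\<in>I. l i \<noteq> 0) \<and> (\<Sum>i\<in>I. l i * a i) = 0"
proof -
  define K where "K = (\<Sum>k\<in>I - {j}. \<mu> k * (c k / c j))"
  have "K \<in> L" unfolding K_def
    using \<mu>(1) c j by (intro subfield_sum[OF L]) (auto intro!: subfieldD[OF L])
  define l where "l i = (if i = j then - K else \<mu> i)" for i
  have "(\<Sum>i\<in>I - {j}. \<mu> i * (a i - (c i / c j) * a j))
      = (\<Sum>i\<in>I - {j}. \<mu> i * a i - (\<mu> i * (c i / c j)) * a j)"
    by (simp add: algebra_simps)
  also have "\<dots> = (\<Sum>i\<in>I - {j}. l i * a i) - K * a j"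
    unfolding K_def l_def by (simp add: sum_subtractf sum_distrib_right)
  finally have "(\<Sum>i\<in>I - {j}. l i * a i) = K * a j" using \<mu>(3) by simp
  then have "(\<Sum>i\<in>I. l i * a i) = 0"
    using I j(1) by (simp add: sum.remove l_def)
  moreover have "\<forall>i\<in>I. l i \<in> L" unfolding l_def using \<mu>(1) \<open>K \<in> L\<close> subfieldD(5)[OF L] by auto
  moreover have "\<exists>i\<in>I. l i \<noteq> 0" using \<mu>(2) unfolding l_def by auto
  ultimately show ?thesis by blast
qed

text \<open>Steinitz exchange, by induction on \<open>B\<close>: eliminate the coefficient of one basis vector
  using a family member \<open>a j\<close> in which it is nonzero.\<close>
lemma span_over_linear_dependent:
  assumes L: "subfield L" and B: "finite B"
  shows "finite I \<Longrightarrow> card B < card I \<Longrightarrow> \<forall>i\<in>I. a i \<in> span_over L B \<Longrightarrow>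
    \<exists>l. (\<forall>i\<in>I. l i \<in> L) \<and> (\<exists>i\<in>I. l i \<noteq> 0) \<and> (\<Sum>i\<in>I. l i * a i) = 0"
  using B
proof (induction B arbitrary: I a rule: finite_induct)
  case empty
  then obtain i0 where i0: "i0 \<in> I" by fastforce
  have "a i = 0" if "i \<in> I" for i using empty.prems(3) that span_over_empty by blast
  then show ?case
    by (intro exI[of _ "\<lambda>i. if i = i0 then 1 else 0"]) (use i0 subfieldD[OF L] in auto)
next
  case (insert b B')
  obtain c s where cs: "\<And>i. i \<in> I \<Longrightarrow> c i \<in> L" "\<And>i. i \<in> I \<Longrightarrow> s i \<in> span_over L B'"
    "\<And>i. i \<in> I \<Longrightarrow> a i = c i * b + s i"
    using span_over_insert_family[OF insert.hyps(1,2) insert.prems(3)] by blast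
  have card_insert: "card (insert b B') = card B' + 1" using insert.hyps by simp
  show ?case
  proof (cases "\<forall>i\<in>I. c i = 0")
    case True
    then have "\<forall>i\<in>I. a i \<in> span_over L B'" using cs by auto
    moreover have "card B' < card I" using insert.prems(2) card_insert by simp
    ultimately show ?thesis using insert.IH[OF insert.prems(1)] by blast
  next
    case False
    then obtain j where j: "j \<in> I" "c j \<noteq> 0" by blast
    have "a i - (c i / c j) * a j \<in> span_over L B'" if i: "i \<in> I - {j}" for i
    proof -
      have "a i - (c i / c j) * a j = s i - (c i / c j) * s j"
        using cs(3)[of i] cs(3)[OF j(1)] i j(2) by (simp add: field_simps)
      then show ?thesis
        using span_over_diff_scale[OF L cs(2) cs(2)[OF j(1)] subfieldD(8)[OF L cs(1) cs(1)[OF j(1)]]] i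
        by simp
    qed
    moreover have "finite (I - {j})" "card B' < card (I - {j})"
      using insert.prems(1,2) card_insert j(1) by auto
    ultimately obtain \<mu> where "\<forall>i\<in>I - {j}. \<mu> i \<in> L" "\<exists>i\<in>I - {j}. \<mu> i \<noteq> 0"
      "(\<Sum>i\<in>I - {j}. \<mu> i * (a i - (c i / c j) * a j)) = 0"
      using insert.IH[of "I - {j}" "\<lambda>i. a i - (c i / c j) * a j"] by blast
    then show ?thesis
      using linear_dependent_eliminated[of L I j c, OF L insert.prems(1) j] cs(1) by blast
  qed
qed

section \<open>Discreteness of the valuation\<close>

locale valuation_subring_findim = valuation_subring F V y for F V :: "'k::field set" and y +
  fixes L :: "'k set" and B :: "'k set"
  assumes subfield_L: "subfield L" and finite_B: "finite B" and span_B: "\<And>x. x \<in> span_over L B"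
begin

text \<open>Among \<open>1, a, \<dots>, a\<^bsup>card B\<^esup>\<close>, which are \<open>L\<close>-linearly dependent, two must be associated.\<close>
lemma power_assoc_one:
  assumes a0: "a \<noteq> 0"
  shows "\<exists>k. 1 \<le> k \<and> k \<le> card B \<and> assoc_over L (a ^ k) 1"
proof (rule ccontr)
  assume none: "\<not> ?thesis"
  have *: False if "i < j" "j \<le> card B" "assoc_over L (a ^ j) (a ^ i)" for i j
  proof -
    have "a ^ j = a ^ i * a ^ (j - i)" using that(1) by (simp add: power_add[symmetric])
    then have "assoc_over L (a ^ i * a ^ (j - i)) (a ^ i * 1)" using that(3) by simp
    then have "assoc_over L (a ^ (j - i)) 1" by (rule assoc_over_cancel) (use a0 in simp)
    then show False using none that by auto
  qed
  define I where "I = {0..card B}"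
  have nonassoc: "\<forall>i\<in>I. \<forall>j\<in>I. i \<noteq> j \<longrightarrow> \<not> assoc_over L (a ^ i) (a ^ j)"
    using * assoc_over_sym[OF subfield_L] unfolding I_def by (metis atLeastAtMost_iff linorder_neqE_nat)
  have "finite I" "card B < card I" unfolding I_def by auto
  then obtain l where l: "\<forall>i\<in>I. l i \<in> L" "\<exists>i\<in>I. l i \<noteq> 0" "(\<Sum>i\<in>I. l i * a ^ i) = 0"
    using span_over_linear_dependent[OF subfield_L finite_B, of I "\<lambda>i. a ^ i"] span_B by blast
  have "\<forall>i\<in>I. l i = 0"
    by (rule nonassoc_linear_independent[OF subfield_L \<open>finite I\<close> _ nonassoc l(1) l(3)]) (use a0 in simp)
  then show False using l(2) by blast
qed

definition exp_bound :: nat where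
  "exp_bound = fact (card B)"

lemma exp_bound_pos: "exp_bound \<ge> 1"
  unfolding exp_bound_def by (simp add: fact_ge_1)

lemma power_exp_bound_assoc_one:
  assumes "a \<noteq> 0" shows "assoc_over L (a ^ exp_bound) 1"
proof -
  obtain k where k: "1 \<le> k" "k \<le> card B" "assoc_over L (a ^ k) 1" using power_assoc_one[OF assms] by blast
  obtain l u where lu: "l \<in> L" "l \<noteq> 0" "vunit u" "a ^ k = l * u * 1"
    using k(3) unfolding assoc_over_def by blast
  have "k dvd exp_bound" unfolding exp_bound_def using k by (simp add: dvd_fact)
  then obtain m where m: "exp_bound = k * m" by blast
  have "a ^ exp_bound = l ^ m * u ^ m * 1" unfolding m power_mult lu(4) by (simp add: power_mult_distrib)
  moreover have "l ^ m \<in> L" using subring_power[OF subfield_subring[OF subfield_L] lu(1)] .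
  ultimately show ?thesis unfolding assoc_over_def using lu(2) vunit_power[OF lu(3)] by auto
qed

lemma exists_nonunit_in_L: "\<exists>l\<in>L. l \<noteq> 0 \<and> \<not> vunit l"
proof (rule ccontr)
  assume all_units: "\<not> ?thesis"
  obtain k where k: "1 \<le> k" "assoc_over L (y ^ k) 1" using power_assoc_one[OF y_nonzero] by blast
  then obtain l u where "l \<in> L" "l \<noteq> 0" "vunit u" "y ^ k = l * u * 1"
    unfolding assoc_over_def by blast
  then have "vunit (y ^ k)" using all_units vunit_mult by auto
  then show False using vmax_power[OF y_in_vmax k(1)] vunit_not_vmax by blast
qed

end

locale valuation_subring_generator = valuation_subring_findim F V y L B
  for F V :: "'k::field set" and y L B +
  fixes g :: 'k
  assumes g_nonzero: "g \<noteq> 0" and g_in_vmax: "g \<in> vmax"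
    and cyclic: "\<And>l. l \<in> L \<Longrightarrow> l \<noteq> 0 \<Longrightarrow> power_unit_rep g l"
begin

lemma power_unit_exponent_unique:
  assumes "vunit u" "vunit u'" "g ^ i * u = g ^ i' * u'"
  shows "i = i'"
proof -
  have False if "i < i'" "vunit u" "vunit u'" "g ^ i * u = g ^ i' * u'" for i i' u u'
  proof -
    have "g ^ i * u = g ^ i * (g ^ (i' - i) * u')"
      using that(1,4) by (simp add: power_add[symmetric] mult.assoc)
    then have "u = g ^ (i' - i) * u'" using g_nonzero by simp
    moreover have "g ^ (i' - i) * u' \<in> vmax"
      using vmax_mult[OF vmax_power[OF g_in_vmax]] that(1,3) unfolding vunit_def by auto
    ultimately show False using that(2) vunit_not_vmax by simp
  qed
  then show ?thesis using assms by (metis linorder_neqE_nat)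
qed

lemma power_exp_bound_rep:
  assumes "a \<noteq> 0" shows "power_unit_rep g (a ^ exp_bound)"
proof -
  obtain l u where lu: "l \<in> L" "l \<noteq> 0" "vunit u" "a ^ exp_bound = l * u * 1"
    using power_exp_bound_assoc_one[OF assms] unfolding assoc_over_def by blast
  obtain i j u' where "vunit u'" "l * g ^ j = g ^ i * u'" using cyclic[OF lu(1,2)]
    unfolding power_unit_rep_def by blast
  then have "vunit (u' * u)" "a ^ exp_bound * g ^ j = g ^ i * (u' * u)"
    using lu(3,4) vunit_mult by (auto simp: ac_simps)
  then show ?thesis unfolding power_unit_rep_def by blast
qed

text \<open>\<open>gval a\<close> is the value of \<open>a\<^bsup>exp_bound\<^esup>\<close> in units of the value of \<open>g\<close>.\<close>
definition gval :: "'k \<Rightarrow> int" where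
  "gval a = (THE m. \<exists>i j u. vunit u \<and> a ^ exp_bound * g ^ j = g ^ i * u \<and> m = int i - int j)"

lemma gval_eq:
  assumes u: "vunit u" and e: "a ^ exp_bound * g ^ j = g ^ i * u"
  shows "gval a = int i - int j"
  unfolding gval_def
proof (rule the_equality)
  fix m assume "\<exists>i' j' u'. vunit u' \<and> a ^ exp_bound * g ^ j' = g ^ i' * u' \<and> m = int i' - int j'"
  then obtain i' j' u' where u': "vunit u'" "a ^ exp_bound * g ^ j' = g ^ i' * u'" "m = int i' - int j'"
    by blast
  have "g ^ (i + j') * u = (g ^ i * u) * g ^ j'" by (simp add: power_add ac_simps)
  also have "\<dots> = (a ^ exp_bound * g ^ j') * g ^ j" using e by (simp add: ac_simps)
  also have "\<dots> = g ^ (i' + j) * u'" using u'(2) by (simp add: power_add ac_simps)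
  finally have "i + j' = i' + j" using power_unit_exponent_unique[OF u u'(1)] by blast
  then show "m = int i - int j" using u'(3) by linarith
qed (use u e in blast)

lemma gval_obtain:
  assumes "a \<noteq> 0"
  obtains i j u where "vunit u" "a ^ exp_bound * g ^ j = g ^ i * u" "gval a = int i - int j"
  using power_exp_bound_rep[OF assms] gval_eq unfolding power_unit_rep_def by blast

lemma gval_mult:
  assumes "a \<noteq> 0" "b \<noteq> 0" shows "gval (a * b) = gval a + gval b"
proof -
  obtain i j u where 1: "vunit u" "a ^ exp_bound * g ^ j = g ^ i * u" "gval a = int i - int j"
    using gval_obtain[OF assms(1)] by blast
  obtain i' j' u' where 2: "vunit u'" "b ^ exp_bound * g ^ j' = g ^ i' * u'" "gval b = int i' - int j'"
    using gval_obtain[OF assms(2)] by blast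
  have "(a * b) ^ exp_bound * g ^ (j + j') = (a ^ exp_bound * g ^ j) * (b ^ exp_bound * g ^ j')"
    by (simp add: power_mult_distrib power_add ac_simps)
  also have "\<dots> = g ^ (i + i') * (u * u')" using 1(2) 2(2) by (simp add: power_add ac_simps)
  finally have "gval (a * b) = int (i + i') - int (j + j')" using gval_eq vunit_mult[OF 1(1) 2(1)] by blast
  then show ?thesis using 1(3) 2(3) by simp
qed

lemma gval_one: "gval 1 = 0"
  using gval_eq[OF vunit_one, of 1 0 0] by simp

lemma gval_inverse: "a \<noteq> 0 \<Longrightarrow> gval (inverse a) = - gval a"
  using gval_mult[of a "inverse a"] gval_one by simp

lemma gval_power: "a \<noteq> 0 \<Longrightarrow> gval (a ^ n) = int n * gval a"
  by (induction n) (auto simp: gval_one gval_mult algebra_simps)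

lemma gval_power_int: "a \<noteq> 0 \<Longrightarrow> gval (a powi k) = k * gval a"
  by (cases "k \<ge> 0") (auto simp: power_int_def gval_power gval_inverse)

lemma gval_nonneg_iff:
  assumes "a \<noteq> 0" shows "gval a \<ge> 0 \<longleftrightarrow> a \<in> V"
proof -
  obtain i j u where 1: "vunit u" "a ^ exp_bound * g ^ j = g ^ i * u" "gval a = int i - int j"
    using gval_obtain[OF assms] by blast
  show ?thesis
  proof
    assume "gval a \<ge> 0"
    then have "j \<le> i" using 1(3) by simp
    then have "g ^ j * a ^ exp_bound = g ^ j * (g ^ (i - j) * u)"
      using 1(2) by (simp add: power_add[symmetric] ac_simps)
    then have "a ^ exp_bound = g ^ (i - j) * u" using g_nonzero by simp
    moreover have "g ^ (i - j) * u \<in> V"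
      using subring_power[OF subring vmaxD[OF g_in_vmax]] 1(1) subringD(4)[OF subring]
      unfolding vunit_def by auto
    ultimately show "a \<in> V" using in_V_if_power_in_V exp_bound_pos by metis
  next
    assume aV: "a \<in> V"
    show "gval a \<ge> 0"
    proof (rule ccontr)
      assume "\<not> gval a \<ge> 0"
      then have "i < j" using 1(3) by simp
      then have "g ^ j = g ^ i * g ^ (j - i)" by (simp add: power_add[symmetric])
      then have "g ^ i * (a ^ exp_bound * g ^ (j - i)) = g ^ i * u"
        using 1(2) by (simp add: ac_simps)
      then have "a ^ exp_bound * g ^ (j - i) = u" using g_nonzero by simp
      moreover have "a ^ exp_bound * g ^ (j - i) \<in> vmax"
        using vmax_mult_left[OF vmax_power[OF g_in_vmax] subring_power[OF subring aV]] \<open>i < j\<close> by auto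
      ultimately show False using 1(1) vunit_not_vmax by simp
    qed
  qed
qed

lemma gval_const: "c \<in> F \<Longrightarrow> c \<noteq> 0 \<Longrightarrow> gval c = 0"
  using vunit_const[of c] gval_nonneg_iff[of c] gval_nonneg_iff[of "inverse c"] gval_inverse[of c]
  unfolding vunit_def by force

lemma gval_y_pos: "gval y > 0"
  using gval_nonneg_iff[of y] gval_nonneg_iff[of "inverse y"] gval_inverse[of y]
    y_nonzero y_in inverse_y_notin by force

lemma gval_add:
  assumes "a \<noteq> 0" "b \<noteq> 0" "a + b \<noteq> 0"
  shows "gval (a + b) \<ge> min (gval a) (gval b)"
proof -
  have *: "gval (a + b) \<ge> gval a" if "gval a \<le> gval b" "a \<noteq> 0" "b \<noteq> 0" "a + b \<noteq> 0" for a b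
  proof -
    have "gval (b / a) = gval b - gval a"
      using gval_mult[of b "inverse a"] gval_inverse that(2,3) by (simp add: divide_inverse)
    then have "b / a \<in> V" using gval_nonneg_iff[of "b / a"] that by simp
    then have "1 + b / a \<in> V" using subringD(2,3)[OF subring] by auto
    moreover have nz: "1 + b / a \<noteq> 0" using that(2,4) by (simp add: field_simps)
    ultimately have "gval (1 + b / a) \<ge> 0" using gval_nonneg_iff by blast
    moreover have "a + b = a * (1 + b / a)" using that(2) by (simp add: field_simps)
    ultimately show ?thesis using gval_mult[OF that(2) nz] by simp
  qed
  show ?thesis using *[of a b] *[of b a] assms by (cases "gval a \<le> gval b") (auto simp: add.commute)
qed

text \<open>The values of \<open>gval\<close> form a subgroup of \<open>\<int>\<close>, hence are the multiples of the least positive one.\<close>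
lemma gval_least_positive:
  obtains d :: nat and \<pi> where "d > 0" "\<pi> \<noteq> 0" "gval \<pi> = int d" "\<And>a. a \<noteq> 0 \<Longrightarrow> int d dvd gval a"
proof -
  define D where "D = {n::nat. n > 0 \<and> (\<exists>a. a \<noteq> 0 \<and> gval a = int n)}"
  have "nat (gval y) \<in> D" unfolding D_def using gval_y_pos y_nonzero by auto
  define d where "d = (LEAST n. n \<in> D)"
  have "d \<in> D" unfolding d_def using \<open>nat (gval y) \<in> D\<close> by (rule LeastI)
  then obtain \<pi> where \<pi>: "\<pi> \<noteq> 0" "gval \<pi> = int d" and "d > 0" unfolding D_def by blast
  have "int d dvd gval a" if "a \<noteq> 0" for a
  proof -
    define r where "r = gval a mod int d"
    have "gval (a * \<pi> powi (- (gval a div int d))) = r"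
      using gval_mult[OF that] gval_power_int[OF \<pi>(1)] \<pi> \<open>a \<noteq> 0\<close>
      unfolding r_def by (simp add: minus_div_mult_eq_mod)
    moreover have "r \<ge> 0" "r < int d" unfolding r_def using \<open>d > 0\<close> by auto
    ultimately have "r \<noteq> 0 \<Longrightarrow> nat r \<in> D"
      unfolding D_def using that \<pi>(1) by (intro CollectI conjI exI[of _ "a * \<pi> powi (- (gval a div int d))"]) auto
    then have "r = 0" using Least_le[of "\<lambda>n. n \<in> D" "nat r"] \<open>r < int d\<close> \<open>r \<ge> 0\<close>
      unfolding d_def by linarith
    then show ?thesis unfolding r_def by auto
  qed
  then show thesis using that \<open>d > 0\<close> \<pi> by blast
qed

lemma exists_normalized_dvaluation: "\<exists>\<nu>. normalized_dvaluation F \<nu> \<and> \<nu> (inverse y) < 0"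
proof -
  obtain d \<pi> where d: "d > 0" and \<pi>: "\<pi> \<noteq> 0" "gval \<pi> = int d"
    and dvd: "\<And>a. a \<noteq> 0 \<Longrightarrow> int d dvd gval a"
    using gval_least_positive by blast
  define \<nu> where "\<nu> x = (if x = 0 then 0 else gval x div int d)" for x
  have "normalized_dvaluation F \<nu>"
    unfolding normalized_dvaluation_def
  proof (intro conjI allI impI ballI)
    show "\<nu> 0 = 0" unfolding \<nu>_def by simp
  next
    fix a b :: 'k assume a0: "a \<noteq> 0" and b0: "b \<noteq> 0"
    show "\<nu> (a * b) = \<nu> a + \<nu> b"
      unfolding \<nu>_def using a0 b0 gval_mult[OF a0 b0] dvd[OF a0] by (simp add: div_plus_div_distrib_dvd_left)
    assume "a + b \<noteq> 0"
    then have "min (gval a) (gval b) div int d \<le> gval (a + b) div int d"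
      using gval_add[OF a0 b0] d by (intro zdiv_mono1) auto
    moreover have "min (gval a) (gval b) div int d = min (gval a div int d) (gval b div int d)"
      using zdiv_mono1[of "gval a" "gval b" "int d"] zdiv_mono1[of "gval b" "gval a" "int d"] d
      by (auto simp: min_def)
    ultimately show "\<nu> (a + b) \<ge> min (\<nu> a) (\<nu> b)" unfolding \<nu>_def using a0 b0 \<open>a + b \<noteq> 0\<close> by simp
  next
    show "surj \<nu>"
    proof (rule surjI)
      fix k :: int
      show "\<nu> (\<pi> powi k) = k" unfolding \<nu>_def using \<pi> gval_power_int[OF \<pi>(1), of k] d by simp
    qed
  next
    fix c assume "c \<in> F" "c \<noteq> 0"
    then show "\<nu> c = 0" unfolding \<nu>_def using gval_const by simp
  qed
  moreover have "\<nu> (inverse y) < 0"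
  proof -
    obtain m where m: "gval y = int d * m" using dvd[OF y_nonzero] by blast
    then have "m > 0" using gval_y_pos d by (simp add: zero_less_mult_iff)
    moreover have "gval (inverse y) = int d * (- m)" using gval_inverse[OF y_nonzero] m by simp
    ultimately show ?thesis unfolding \<nu>_def using y_nonzero d by (simp del: mult_minus_right)
  qed
  ultimately show ?thesis by blast
qed

end

section \<open>Existence of poles\<close>

lemma poly_over_cancel_lead_coeff:
  assumes F: "subfield F" and p: "poly_over F p" "p \<noteq> 0" and f: "poly_over F f" "f \<noteq> 0"
    and deg: "degree p \<le> degree f"
  obtains h where "poly_over F h" "f - p * h = 0 \<or> degree (f - p * h) < degree f"
proof -
  have R: "subring F" using F by (rule subfield_subring)
  define k where "k = degree f - degree p"
  define c where "c = lead_coeff f / lead_coeff p"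
  define h where "h = smult c (monom 1 k)"
  have "poly_over F h"
    unfolding h_def c_def using f(1) p(1) subfieldD(8)[OF F]
    by (intro poly_over_smult[OF R] poly_over_monom[OF R subfieldD(2)[OF F]]) auto
  moreover have ph: "p * h = smult c (monom 1 k * p)" unfolding h_def by (simp add: ac_simps)
  have "coeff (p * h) (degree f) = lead_coeff f"
    unfolding ph c_def k_def using deg p(2) by (simp add: coeff_monom_mult)
  moreover have "degree (p * h) \<le> degree f"
  proof -
    have "degree (p * h) \<le> degree (monom (1::'a) k) + degree p"
      unfolding ph using degree_smult_le degree_mult_le order_trans by blast
    then show ?thesis using degree_monom_le[of "1::'a" k] deg unfolding k_def by linarith
  qed
  ultimately show thesis using that degree_diff_le_max[of f "p * h"]
    by (metis coeff_diff diff_self le_neq_implies_less leading_coeff_0_iff max.absorb1)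
qed

lemma poly_over_division:
  assumes F: "subfield F" and p: "poly_over F p" "p \<noteq> 0" and f: "poly_over F f"
  obtains h r where "poly_over F h" "poly_over F r" "f = p * h + r" "r = 0 \<or> degree r < degree p"
  using f
proof (induction "degree f" arbitrary: f thesis rule: less_induct)
  case less
  have R: "subring F" using F by (rule subfield_subring)
  show ?case
  proof (cases "f = 0 \<or> degree f < degree p")
    case True
    show ?thesis by (rule less.prems(1)[of 0 f]) (use True less.prems(2) subfieldD(1)[OF F] in auto)
  next
    case False
    then obtain h where h: "poly_over F h" "f - p * h = 0 \<or> degree (f - p * h) < degree f"
      using poly_over_cancel_lead_coeff[OF F p less.prems(2)] by auto
    show ?thesis
    proof (cases "f - p * h = 0")
      case True
      then show ?thesis
        by (intro less.prems(1)[OF h(1), of 0]) (use subfieldD(1)[OF F] in auto)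
    next
      case False
      have "poly_over F (f - p * h)"
        by (rule poly_over_diff[OF R less.prems(2) poly_over_mult[OF R p(1) h(1)]])
      then obtain h' r where hr: "poly_over F h'" "poly_over F r" "f - p * h = p * h' + r"
        "r = 0 \<or> degree r < degree p"
        using less.hyps[of "f - p * h"] h(2) False by blast
      then have "f = p * (h' + h) + r" by (simp add: algebra_simps)
      then show ?thesis using less.prems(1) poly_over_add[OF R hr(1) h(1)] hr(2,4) by blast
    qed
  qed
qed

context valuation_subring
begin

lemma power_unit_rep_rat_fun_field:
  assumes t: "\<not> algebraic_over F t"
    and polys: "\<And>f. f \<noteq> 0 \<Longrightarrow> poly_over F f \<Longrightarrow> power_unit_rep g (poly f t)"
    and l: "l \<in> rat_fun_field F t" "l \<noteq> 0"
  shows "power_unit_rep g l"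
proof -
  obtain p r where pr: "poly_over F p" "poly_over F r" "r \<noteq> 0" "l = poly p t / poly r t"
    using l(1) by (rule rat_fun_fieldE)
  have "p \<noteq> 0" using pr(4) l(2) by auto
  obtain ip jp up where P: "vunit up" "poly p t * g ^ jp = g ^ ip * up"
    using polys[OF \<open>p \<noteq> 0\<close> pr(1)] unfolding power_unit_rep_def by blast
  obtain ir jr ur where R: "vunit ur" "poly r t * g ^ jr = g ^ ir * ur"
    using polys[OF pr(3,2)] unfolding power_unit_rep_def by blast
  have "poly r t \<noteq> 0" "ur \<noteq> 0"
    using poly_transcendental_nonzero[OF t pr(2,3)] R(1) unfolding vunit_def by auto
  have "l * g ^ (jp + ir) * ur = (poly p t * g ^ jp) * (g ^ ir * ur) / poly r t"
    unfolding pr(4) by (simp add: power_add field_simps)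
  also have "\<dots> = (g ^ ip * up) * (poly r t * g ^ jr) / poly r t" unfolding P(2) R(2)[symmetric] by simp
  also have "\<dots> = g ^ (ip + jr) * up" using \<open>poly r t \<noteq> 0\<close> by (simp add: power_add field_simps)
  finally have "l * g ^ (jp + ir) = g ^ (ip + jr) * (up / ur)" using \<open>ur \<noteq> 0\<close> by (simp add: field_simps)
  then show ?thesis unfolding power_unit_rep_def using vunit_divide[OF P(1) R(1)] by blast
qed

lemma power_unit_rep_notin:
  assumes "t \<notin> V" "f \<noteq> 0" "poly_over F f"
  shows "power_unit_rep (inverse t) (poly f t)"
proof -
  have t0: "t \<noteq> 0" using assms(1) subringD(1)[OF subring] by auto
  have reflect: "poly (reflect_poly f) (inverse t) = poly f t * inverse t ^ degree f"
    using poly_reflect_poly_nz[of "inverse t" f] t0 by (simp add: mult.commute)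
  have over_V: "poly_over V (reflect_poly f)"
    using assms(3) F_subset subringD(1)[OF subring] by (auto simp: coeff_reflect_poly)
  have "poly (reflect_poly f) (inverse t) - lead_coeff f \<in> vmax"
    using poly_minus_coeff0_in_vmax[OF over_V inverse_in_vmax[OF t0 assms(1)]]
    by (simp add: coeff_0_reflect_poly)
  moreover have "vunit (lead_coeff f)" using vunit_const assms(2,3) by simp
  ultimately have "vunit (poly f t * inverse t ^ degree f)"
    using vunit_add_vmax[of "lead_coeff f"] reflect by fastforce
  then show ?thesis unfolding power_unit_rep_def by (intro exI[of _ 0] exI[of _ "degree f"] exI) simp
qed

text \<open>For \<open>t \<in> V\<close>, a polynomial \<open>p0\<close> of least degree with \<open>p0(t) \<in> vmax\<close> plays the role of a
  prime of \<open>F[t]\<close>: dividing \<open>f\<close> by \<open>p0\<close> leaves a remainder whose value at \<open>t\<close> lies in \<open>vmax\<close>,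
  so it vanishes by minimality whenever \<open>f(t) \<in> vmax\<close>.\<close>
lemma poly_eq_power_times_vunit:
  assumes t: "t \<in> V" and p0: "poly_over F p0" "p0 \<noteq> 0" "poly p0 t \<in> vmax"
    and minimal: "\<And>f. f \<noteq> 0 \<Longrightarrow> poly_over F f \<Longrightarrow> poly f t \<in> vmax \<Longrightarrow> degree p0 \<le> degree f"
  shows "poly_over F f \<Longrightarrow> f \<noteq> 0 \<Longrightarrow> \<exists>k u. vunit u \<and> poly f t = poly p0 t ^ k * u"
proof (induction "degree f" arbitrary: f rule: less_induct)
  case less
  have in_V: "poly h t \<in> V" if "poly_over F h" for h
    using poly_in_subring[OF subring t] that F_subset by blast
  show ?case
  proof (cases "vunit (poly f t)")
    case True then show ?thesis by (intro exI[of _ 0] exI[of _ "poly f t"]) simp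
  next
    case False
    then have f_vmax: "poly f t \<in> vmax" using in_V[OF less.prems(1)] unfolding vmax_def by auto
    obtain h r where hr: "poly_over F h" "poly_over F r" "f = p0 * h + r" "r = 0 \<or> degree r < degree p0"
      using poly_over_division[OF subfield p0(1,2) less.prems(1)] by blast
    have "poly r t = poly f t - poly p0 t * poly h t" using hr(3) by simp
    moreover have "poly p0 t * poly h t \<in> vmax" using vmax_mult[OF p0(3) in_V[OF hr(1)]] .
    ultimately have "poly r t \<in> vmax" using vmax_add[OF f_vmax vmax_uminus] by simp
    then have "r = 0" using minimal[OF _ hr(2)] hr(4) by fastforce
    then have fh: "f = p0 * h" using hr(3) by simp
    then have "h \<noteq> 0" using less.prems(2) by auto
    have "degree p0 \<noteq> 0"
    proof
      assume "degree p0 = 0"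
      then have "poly p0 t = coeff p0 0" "coeff p0 0 \<noteq> 0"
        using p0(2) by (auto simp: poly_altdef leading_coeff_0_iff[of p0, symmetric])
      then show False using p0(1,3) vunit_const vunit_not_vmax by metis
    qed
    then have "degree h < degree f" using fh p0(2) \<open>h \<noteq> 0\<close> by (simp add: degree_mult_eq)
    then obtain k u where "vunit u" "poly h t = poly p0 t ^ k * u" using less.hyps hr(1) \<open>h \<noteq> 0\<close> by blast
    then have "poly f t = poly p0 t ^ Suc k * u" using fh by simp
    then show ?thesis using \<open>vunit u\<close> by blast
  qed
qed

end

context valuation_subring_findim
begin

lemma power_unit_rep_in:
  assumes t: "\<not> algebraic_over F t" "t \<in> V" and L: "L = rat_fun_field F t"
  obtains g where "g \<noteq> 0" "g \<in> vmax" "\<And>f. f \<noteq> 0 \<Longrightarrow> poly_over F f \<Longrightarrow> power_unit_rep g (poly f t)"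
proof -
  have in_V: "poly h t \<in> V" if "poly_over F h" for h
    using poly_in_subring[OF subring t(2)] that F_subset by blast
  obtain f where f: "f \<noteq> 0" "poly_over F f" "poly f t \<in> vmax"
  proof -
    obtain l where "l \<in> L" "l \<noteq> 0" "\<not> vunit l" using exists_nonunit_in_L by blast
    then obtain p r where pr: "poly_over F p" "poly_over F r" "r \<noteq> 0" "l = poly p t / poly r t"
      unfolding L by (blast elim: rat_fun_fieldE)
    then have "\<not> vunit (poly p t) \<or> \<not> vunit (poly r t)" using \<open>\<not> vunit l\<close> vunit_divide by blast
    moreover have "p \<noteq> 0" using pr(4) \<open>l \<noteq> 0\<close> by auto
    ultimately show ?thesis using that pr(1-3) in_V unfolding vmax_def by blast
  qed
  define P where "P n \<longleftrightarrow> (\<exists>f. f \<noteq> 0 \<and> poly_over F f \<and> poly f t \<in> vmax \<and> degree f = n)" for n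
  have "P (degree f)" unfolding P_def using f by blast
  then have "P (LEAST n. P n)" by (rule LeastI)
  then obtain p0 where p0: "p0 \<noteq> 0" "poly_over F p0" "poly p0 t \<in> vmax" "degree p0 = (LEAST n. P n)"
    unfolding P_def by blast
  have minimal: "degree p0 \<le> degree f" if "f \<noteq> 0" "poly_over F f" "poly f t \<in> vmax" for f
    unfolding p0(4) by (rule Least_le) (use that in \<open>auto simp: P_def\<close>)
  have rep: "power_unit_rep (poly p0 t) (poly f t)" if hf: "f \<noteq> 0" "poly_over F f" for f
  proof -
    obtain k u where "vunit u" "poly f t = poly p0 t ^ k * u"
      using poly_eq_power_times_vunit[OF t(2) p0(2,1,3) minimal hf(2,1)] by blast
    then show ?thesis unfolding power_unit_rep_def by (intro exI[of _ k] exI[of _ 0] exI[of _ u]) simp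
  qed
  show thesis by (rule that[OF poly_transcendental_nonzero[OF t(1) p0(2,1)] p0(3) rep])
qed

lemma exists_generator_rat_fun_field:
  assumes t: "\<not> algebraic_over F t" and L: "L = rat_fun_field F t"
  obtains g where "valuation_subring_generator F V y L B g"
proof -
  obtain g where g: "g \<noteq> 0" "g \<in> vmax" "\<And>f. f \<noteq> 0 \<Longrightarrow> poly_over F f \<Longrightarrow> power_unit_rep g (poly f t)"
  proof (cases "t \<in> V")
    case False
    then have "t \<noteq> 0" using subringD(1)[OF subring] by auto
    then show thesis
      by (intro that[of "inverse t"] inverse_in_vmax[OF _ False] power_unit_rep_notin[OF False]) simp_all
  next
    case True
    show thesis by (rule power_unit_rep_in[OF t True L that])
  qed
  have "valuation_subring_generator F V y L B g"
    by (intro valuation_subring_generator.intro valuation_subring_findim_axioms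
        valuation_subring_generator_axioms.intro g(1,2))
      (use power_unit_rep_rat_fun_field[OF t g(3)] in \<open>simp add: L\<close>)
  then show thesis by (rule that)
qed

end

lemma notin_adjoin_inverse:
  assumes F: "subfield F" and closed: "\<And>z. algebraic_over F z \<Longrightarrow> z \<in> F" and x: "x \<notin> F"
  shows "x \<notin> adjoin F (inverse x)"
proof
  assume "x \<in> adjoin F (inverse x)"
  then obtain p where p: "x = poly p (inverse x)" "poly_over F p" unfolding adjoin_def by blast
  have "x \<noteq> 0" using x subfieldD(1)[OF F] by auto
  then have "poly (pCons (-1) p) (inverse x) = 0" using p(1) by simp
  moreover have "poly_over F (pCons (-1) p)"
    using p(2) subfieldD(2,5)[OF F] by (auto simp: coeff_pCons split: nat.splits)
  moreover have "pCons (-1) p \<noteq> 0" by simp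
  ultimately have "inverse x \<in> F" using closed unfolding algebraic_over_def by blast
  then show False using x subfieldD(7)[OF F] by (metis inverse_inverse_eq)
qed

lemma pole_exists:
  assumes K: "function_field_over F q" and x: "x \<notin> F"
  shows "\<exists>\<nu>. normalized_dvaluation F \<nu> \<and> \<nu> x < 0"
proof -
  have F: "subfield F" and closed: "\<And>z. algebraic_over F z \<Longrightarrow> z \<in> F"
    using K unfolding function_field_over_def by auto
  obtain t B where t: "\<not> algebraic_over F t" and B: "finite B" "\<And>z. z \<in> span_over (rat_fun_field F t) B"
    using K unfolding function_field_over_def finite_dim_over_span by blast
  define y where "y = inverse x"
  have "subring (adjoin F y)" "y \<in> adjoin F y" "inverse y \<notin> adjoin F y"
    using subring_adjoin[OF subfield_subring[OF F]] notin_adjoin_inverse[OF F closed x]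
    unfolding y_def by auto
  then obtain V where V: "adjoin F y \<subseteq> V" "subring_maximal_avoiding V y"
    using exists_subring_maximal_avoiding by blast
  then interpret valuation_subring F V y
    using subring_maximal_avoiding.valuation_subring[OF V(2) F] subring_adjoin(2)[OF subfield_subring[OF F]]
    by blast
  interpret valuation_subring_findim F V y "rat_fun_field F t" B
    using rat_fun_field_subfield[OF F t] B by unfold_locales auto
  obtain g where "valuation_subring_generator F V y (rat_fun_field F t) B g"
    using exists_generator_rat_fun_field[OF t refl] by blast
  then show ?thesis
    using valuation_subring_generator.exists_normalized_dvaluation unfolding y_def by fastforce
qed

lemma R_omega_nonconst_neg:
  assumes "function_field_over F q" "z \<in> R_omega F \<omega> - F"
  shows "\<omega> z < 0"
proof -
  obtain \<nu> where \<nu>: "normalized_dvaluation F \<nu>" "\<nu> z < 0" using pole_exists assms by blast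
  then have "\<nu> = \<omega>" using assms(2) unfolding R_omega_def by force
  then show ?thesis using \<nu>(2) by simp
qed

section \<open>The ultrametric estimate\<close>

lemma dvaluation_det_one:
  assumes \<omega>: "normalized_dvaluation F \<omega>" and det: "a * d - b * c = 1"
    and nz: "a \<noteq> 0" "b \<noteq> 0" "c \<noteq> 0" "d \<noteq> 0"
    and neg: "\<omega> a < 0" "\<omega> d < 0" and ab: "\<omega> a \<le> \<omega> b"
  shows "\<omega> c \<le> \<omega> d"
proof (rule ccontr)
  have mult: "\<And>x y. x \<noteq> 0 \<Longrightarrow> y \<noteq> 0 \<Longrightarrow> \<omega> (x * y) = \<omega> x + \<omega> y"
    and ultra: "\<And>x y. x \<noteq> 0 \<Longrightarrow> y \<noteq> 0 \<Longrightarrow> x + y \<noteq> 0 \<Longrightarrow> \<omega> (x + y) \<ge> min (\<omega> x) (\<omega> y)"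
    using \<omega> unfolding normalized_dvaluation_def by auto
  have "\<omega> 1 = 0" using mult[of 1 1] by simp
  have ad: "a * d = 1 + b * c" using det by (simp add: algebra_simps)
  then have "\<omega> (a * d) \<ge> min 0 (\<omega> (b * c))"
    using ultra[of 1 "b * c"] nz \<open>\<omega> 1 = 0\<close> by (metis mult_eq_0_iff one_neq_zero)
  moreover assume "\<not> \<omega> c \<le> \<omega> d"
  then have "\<omega> (a * d) < \<omega> (b * c)" using mult nz ab by simp
  ultimately show False using mult[of a d] nz neg by linarith
qed

lemma absv_le_iff:
  "q_omega \<omega> > 1 \<Longrightarrow> x \<noteq> 0 \<Longrightarrow> y \<noteq> 0 \<Longrightarrow> absv \<omega> x \<le> absv \<omega> y \<longleftrightarrow> \<omega> y \<le> \<omega> x"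
  unfolding absv_def by simp

lemma absv_eq_if_q_omega_le_1:
  "q_omega \<omega> \<le> 1 \<Longrightarrow> x \<noteq> 0 \<Longrightarrow> y \<noteq> 0 \<Longrightarrow> absv \<omega> x = absv \<omega> y"
  unfolding absv_def by (cases "q_omega \<omega>") auto

theorem lemma2p1:
  fixes F :: "'k::field set" and q :: nat and \<omega> :: "'k \<Rightarrow> int" and a b c d :: 'k
  assumes "function_field_over F q"
    and "normalized_dvaluation F \<omega>"
    and "a \<in> R_omega F \<omega> - F" and "b \<in> R_omega F \<omega> - F"
    and "c \<in> R_omega F \<omega> - F" and "d \<in> R_omega F \<omega> - F"
    and "a * d - b * c = 1"
    and "absv \<omega> a \<ge> absv \<omega> b"
  shows "absv \<omega> c \<ge> absv \<omega> d"
proof -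
  have "0 \<in> F" using assms(1) unfolding function_field_over_def subfield_def by blast
  then have nz: "a \<noteq> 0" "b \<noteq> 0" "c \<noteq> 0" "d \<noteq> 0" using assms(3-6) by auto
  have neg: "\<omega> a < 0" "\<omega> d < 0" using R_omega_nonconst_neg assms(1,3,6) by auto
  show ?thesis
  proof (cases "q_omega \<omega> > 1")
    case True
    then have "\<omega> a \<le> \<omega> b" using assms(8) absv_le_iff nz by blast
    then have "\<omega> c \<le> \<omega> d" using dvaluation_det_one[OF assms(2,7) nz neg] by blast
    then show ?thesis using absv_le_iff True nz by blast
  next
    case False
    then show ?thesis using absv_eq_if_q_omega_le_1 nz by (metis not_le order_refl)
  qed
qed

end
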